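(* Let $\Pi_n$ be a PARITY$_n$ program. Suppose $\Pi_n$ contains a rule $x\leftarrow B$ (with $x$ a variable) such that $not\ not\ x\in B$ and $S(B)=\{J\}$ for a single string $J$ which is even. Then the program $\Pi_n'=\Pi_n\setminus\{x\leftarrow B\}$ satisfies $Ans(\Pi_n')=$ PARITY$_n$.
   Context: A rule element is one of $\top$, $\bot$, $x$, $not\ x$, $not\ not\ x$, where $x$ is a variable. A (canonical) rule is $H\leftarrow B$ with $H$ a variable or $\bot$ and $B$ a finite set of rule elements; a canonical program is a finite set of rules. For a set of variables $I$: $I\models\top$; $I\not\models\bot$; $I\models x$ iff $I\models not\ not\ x$ iff $x\in I$; $I\models not\ x$ iff $x\notin I$; $I\models B$ iff $I$ satisfies every element of $B$; $I$ is closed under $H\leftarrow B$ if $I\models B$ implies $I\models H$. The reduct $\Pi^I$ replaces $not\ not\ x$ by $\top$ if $x\in I$ else $\bot$, and $not\ x$ by $\top$ if $x\notin I$ else $\bot$; $I$ is an answer set of $\Pi$ if $I$ is the least set closed under all rules of $\Pi^I$; $Ans(\Pi)$ is the set of answer sets; $var(\Pi)$ is the set of variables occurring in $\Pi$. Strings $w\in\{0,1\}^n$ are identified with $\{x_i:w_i=1\}$; PARITY$_n$ is the set of strings in $\{0,1\}^n$ with an odd number of 1's (odd strings; the others are even); a PARITY$_n$ program is a canonical program $\Pi$ with $var(\Pi)=\{x_1,\dots,x_n\}$ and $Ans(\Pi)=$ PARITY$_n$. For a set $B$ of rule elements, $S(B)=\{I\subseteq\{x_1,\dots,x_n\}: I\models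 B\}$. *)

theory Defs
  imports Main
begin

datatype elem = ETop | EBot | Pos nat | Neg nat | NNeg nat

datatype head = HVar nat | HBot

type_synonym rule = "head \<times> elem set"
type_synonym program = "rule set"

definition canonical_program :: "program \<Rightarrow> bool" where
  "canonical_program P \<longleftrightarrow> finite P \<and> (\<forall>r\<in>P. finite (snd r))"

fun sat_elem :: "nat set \<Rightarrow> elem \<Rightarrow> bool" where
  "sat_elem I ETop = True"
| "sat_elem I EBot = False"
| "sat_elem I (Pos x) = (x \<in> I)"
| "sat_elem I (Neg x) = (x \<notin> I)"
| "sat_elem I (NNeg x) = (x \<in> I)"

fun sat_head :: "nat set \<Rightarrow> head \<Rightarrow> bool" where
  "sat_head I (HVar x) = (x \<in> I)"
| "sat_head I HBot = False"

definition sat_body :: "nat set \<Rightarrow> elem set \<Rightarrow> bool" where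
  "sat_body I B \<longleftrightarrow> (\<forall>e\<in>B. sat_elem I e)"

definition closed_rule :: "nat set \<Rightarrow> rule \<Rightarrow> bool" where
  "closed_rule I r \<longleftrightarrow> (sat_body I (snd r) \<longrightarrow> sat_head I (fst r))"

fun red_elem :: "nat set \<Rightarrow> elem \<Rightarrow> elem" where
  "red_elem I (NNeg x) = (if x \<in> I then ETop else EBot)"
| "red_elem I (Neg x) = (if x \<notin> I then ETop else EBot)"
| "red_elem I e = e"

definition reduct :: "program \<Rightarrow> nat set \<Rightarrow> program" where
  "reduct P I = (\<lambda>(H, B). (H, red_elem I ` B)) ` P"

definition answer_set :: "program \<Rightarrow> nat set \<Rightarrow> bool" where
  "answer_set P I \<longleftrightarrow>
     (\<forall>r\<in>reduct P I. closed_rule I r) \<and>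
     (\<forall>J. (\<forall>r\<in>reduct P I. closed_rule J r) \<longrightarrow> I \<subseteq> J)"

definition Ans :: "program \<Rightarrow> nat set set" where
  "Ans P = {I. answer_set P I}"

fun elem_vars :: "elem \<Rightarrow> nat set" where
  "elem_vars (Pos x) = {x}"
| "elem_vars (Neg x) = {x}"
| "elem_vars (NNeg x) = {x}"
| "elem_vars _ = {}"

fun head_vars :: "head \<Rightarrow> nat set" where
  "head_vars (HVar x) = {x}"
| "head_vars HBot = {}"

definition var :: "program \<Rightarrow> nat set" where
  "var P = (\<Union>(H, B)\<in>P. head_vars H \<union> (\<Union>e\<in>B. elem_vars e))"

text \<open>Strings in {0,1}^n are identified with subsets of {1..n}.\<close>
definition PARITY :: "nat \<Rightarrow> nat set set" where
  "PARITY n = {I. I \<subseteq> {1..n} \<and> odd (card I)}"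

definition parity_program :: "nat \<Rightarrow> program \<Rightarrow> bool" where
  "parity_program n P \<longleftrightarrow> canonical_program P \<and> var P = {1..n} \<and> Ans P = PARITY n"

definition S :: "nat \<Rightarrow> elem set \<Rightarrow> nat set set" where
  "S n B = {I. I \<subseteq> {1..n} \<and> sat_body I B}"

end

theory Submission
  imports Defs
begin

text \<open>
  Removing a rule \<open>H \<leftarrow> B\<close> cannot destroy an answer set \<open>I\<close> with \<open>I \<not>\<Turnstile> B\<close>: if \<open>K\<close> is closed
  under the smaller reduct, then \<open>K \<inter> I\<close> is closed under the full one, because a body of the
  reduct satisfied by a subset of \<open>I\<close> is satisfied by \<open>I\<close> itself.  Conversely, a rule
  \<open>x \<leftarrow> B\<close> with \<open>not not x \<in> B\<close> is satisfied by every \<open>I\<close>, since its reduct has body \<open>\<bottom>\<close> when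
  \<open>x \<notin> I\<close>; so adding it creates no new answer set.  In the theorem, every answer set of \<open>\<Pi>\<^sub>n\<close> is
  odd, hence differs from the even \<open>J\<close> and falsifies \<open>B\<close>.
\<close>

lemma closed_reduct_iff:
  "(\<forall>r\<in>reduct P I. closed_rule K r) \<longleftrightarrow>
   (\<forall>H B. (H, B) \<in> P \<longrightarrow> sat_body K (red_elem I ` B) \<longrightarrow> sat_head K H)"
  unfolding reduct_def closed_rule_def by fastforce

lemma answer_set_iff:
  "answer_set P I \<longleftrightarrow>
     (\<forall>H B. (H, B) \<in> P \<longrightarrow> sat_body I (red_elem I ` B) \<longrightarrow> sat_head I H) \<and>
     (\<forall>K. (\<forall>H B. (H, B) \<in> P \<longrightarrow> sat_body K (red_elem I ` B) \<longrightarrow> sat_head K H) \<longrightarrow> I \<subseteq> K)"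
  unfolding answer_set_def closed_reduct_iff ..

lemma sat_body_reduct_imp_sat_body:
  assumes "K \<subseteq> I" and "sat_body K (red_elem I ` B)"
  shows "sat_body I B"
proof -
  have "sat_elem I e" if "K \<subseteq> I" "sat_elem K (red_elem I e)" for e
    using that by (cases e) (auto split: if_splits)
  with assms show ?thesis
    unfolding sat_body_def by blast
qed

lemma sat_body_reduct_mono:
  assumes "K \<subseteq> L" and "sat_body K (red_elem I ` B)"
  shows "sat_body L (red_elem I ` B)"
proof -
  have "sat_elem L (red_elem I e)" if "K \<subseteq> L" "sat_elem K (red_elem I e)" for e
    using that by (cases e) (auto split: if_splits)
  with assms show ?thesis
    unfolding sat_body_def by blast
qed

lemma sat_body_reduct_NNeg:
  assumes "NNeg x \<in> B" and "sat_body K (red_elem I ` B)"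
  shows "x \<in> I"
  using assms unfolding sat_body_def by (metis elem.distinct(1) image_eqI red_elem.simps(1) sat_elem.simps(2))

lemma sat_head_Int [simp]: "sat_head (K \<inter> I) H \<longleftrightarrow> sat_head K H \<and> sat_head I H"
  by (cases H) auto

lemma answer_set_Diff_rule:
  assumes ans: "answer_set P I" and not_sat: "\<not> sat_body I B"
  shows "answer_set (P - {(H, B)}) I"
proof -
  have closed: "\<And>H' B'. (H', B') \<in> P \<Longrightarrow> sat_body I (red_elem I ` B') \<Longrightarrow> sat_head I H'"
    and least: "\<And>K. \<forall>H' B'. (H', B') \<in> P \<longrightarrow> sat_body K (red_elem I ` B') \<longrightarrow> sat_head K H'
                   \<Longrightarrow> I \<subseteq> K"
    using ans unfolding answer_set_iff by blast+
  have "I \<subseteq> K"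
    if closed_K: "\<forall>H' B'. (H', B') \<in> P - {(H, B)} \<longrightarrow> sat_body K (red_elem I ` B') \<longrightarrow> sat_head K H'"
    for K
  proof -
    have "sat_head (K \<inter> I) H'"
      if rule: "(H', B') \<in> P" and body: "sat_body (K \<inter> I) (red_elem I ` B')" for H' B'
    proof (cases "(H', B') = (H, B)")
      case True
      then show ?thesis
        using body not_sat sat_body_reduct_imp_sat_body[of "K \<inter> I" I B] by auto
    next
      case False
      then show ?thesis
        using rule body closed closed_K sat_body_reduct_mono[of "K \<inter> I"] by auto
    qed
    then have "I \<subseteq> K \<inter> I"
      using least by blast
    then show ?thesis by blast
  qed
  then show ?thesis
    unfolding answer_set_iff using closed by blast
qed

lemma answer_set_insert_NNeg_rule:
  assumes ans: "answer_set P I" and "NNeg x \<in> B"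
  shows "answer_set (insert (HVar x, B) P) I"
proof -
  have "sat_head I (HVar x)" if "sat_body I (red_elem I ` B)"
    using sat_body_reduct_NNeg[OF \<open>NNeg x \<in> B\<close> that] by simp
  with ans show ?thesis
    unfolding answer_set_iff by blast
qed

theorem mainTheorem10:
  fixes n :: nat and P :: program and x :: nat and B :: "elem set" and J :: "nat set"
  assumes "parity_program n P"
    and "(HVar x, B) \<in> P"
    and "NNeg x \<in> B"
    and "S n B = {J}"
    and "even (card J)"
  shows "Ans (P - {(HVar x, B)}) = PARITY n"
proof -
  have Ans_P: "Ans P = PARITY n"
    using assms(1) unfolding parity_program_def by blast
  have "answer_set (P - {(HVar x, B)}) I" if "I \<in> PARITY n" for I
  proof -
    have "I \<noteq> J"
      using that assms(5) unfolding PARITY_def by auto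
    then have "\<not> sat_body I B"
      using that assms(4) unfolding PARITY_def S_def by blast
    then show ?thesis
      using that Ans_P answer_set_Diff_rule unfolding Ans_def by blast
  qed
  moreover have "answer_set P I" if "answer_set (P - {(HVar x, B)}) I" for I
    using answer_set_insert_NNeg_rule[OF that assms(3)] assms(2) by (simp add: insert_absorb)
  ultimately show ?thesis
    using Ans_P unfolding Ans_def by blast
qed

end
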